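(* Fix $0<b<1$. For $\lambda>0$ let $s_\lambda$ be a minimizer of $$J_\lambda[s]=2\pi\int_b^1\Big(s'^2+\frac{4s^2}{r^2}+\frac{\lambda}{4}(2s^2-1)^2\Big)r\,dr$$ over $s\in H^1(b,1)$ with $s(b)=s(1)=\frac1{\sqrt2}$. Then $s_\lambda\to\frac1{\sqrt2}$ uniformly on $[b,1]$ as $\lambda\to\infty$.
   Context: Here $\lambda=|A|/L$, where $A<0$ is the (rescaled) temperature parameter and $L>0$ the elastic constant of the Landau–de Gennes model; $s_\lambda$ is the scalar order parameter of the defect-free state $Q^*=s_\lambda(r)(\mathbf n\otimes\mathbf n-\mathbf m\otimes\mathbf m)$ on the annulus $b\le r\le1$, and it is a nonnegative classical solution of $s''+s'/r-4s/r^2=\lambda s(2s^2-1)$. *)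

theory Defs
  imports "HOL-Analysis.Analysis"
begin

text \<open>Sobolev space H^1 on an interval [a,c] in one dimension: s (its continuous
representative) is an indefinite integral of a square-integrable weak derivative g.\<close>
definition H1_on :: "real \<Rightarrow> real \<Rightarrow> (real \<Rightarrow> real) \<Rightarrow> (real \<Rightarrow> real) \<Rightarrow> bool" where
  "H1_on a c s g \<longleftrightarrow>
     g absolutely_integrable_on {a..c} \<and>
     (\<lambda>r. (g r)\<^sup>2) integrable_on {a..c} \<and>
     (\<forall>x\<in>{a..c}. s x = s a + integral {a..x} g)"

definition J_energy :: "real \<Rightarrow> real \<Rightarrow> (real \<Rightarrow> real) \<Rightarrow> (real \<Rightarrow> real) \<Rightarrow> real" where
  "J_energy b lam s g =
     2 * pi * integral {b..1}
       (\<lambda>r. ((g r)\<^sup>2 + 4 * (s r)\<^sup>2 / r\<^sup>2 + lam / 4 * (2 * (s r)\<^sup>2 - 1)\<^sup>2) * r)"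

definition admissible :: "real \<Rightarrow> (real \<Rightarrow> real) \<Rightarrow> (real \<Rightarrow> real) \<Rightarrow> bool" where
  "admissible b s g \<longleftrightarrow> H1_on b 1 s g \<and> s b = 1 / sqrt 2 \<and> s 1 = 1 / sqrt 2"

definition is_minimizer :: "real \<Rightarrow> real \<Rightarrow> (real \<Rightarrow> real) \<Rightarrow> bool" where
  "is_minimizer b lam s \<longleftrightarrow>
     (\<exists>g. admissible b s g \<and>
        (\<forall>t h. admissible b t h \<longrightarrow> J_energy b lam s g \<le> J_energy b lam t h))"

end

theory Submission
  imports Defs
begin

text \<open>Comparing with the constant competitor 1/sqrt 2, whose energy does not depend on lambda,
bounds the Dirichlet integral of a minimizer uniformly in lambda and the potential integral
by O(1/lambda). The first bound makes the minimizers uniformly equicontinuous. If a minimizer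
deviated by e from 1/sqrt 2 somewhere, then, since it equals 1/sqrt 2 at b, it would stay at
distance between e/4 and 3e/4 from 1/sqrt 2 on an interval of fixed length, where the potential
is at least of order e^2; this contradicts the O(1/lambda) bound for large lambda.\<close>

lemma H1_on_integrable: "H1_on a c s g \<Longrightarrow> g integrable_on {a..c}"
  unfolding H1_on_def absolutely_integrable_on_def by blast

lemma H1_on_square_integrable: "H1_on a c s g \<Longrightarrow> (\<lambda>r. (g r)\<^sup>2) integrable_on {a..c}"
  unfolding H1_on_def by blast

lemma H1_on_eq_integral:
  "H1_on a c s g \<Longrightarrow> x \<in> {a..c} \<Longrightarrow> s x = s a + integral {a..x} g"
  unfolding H1_on_def by blast

lemma H1_on_continuous:
  assumes "H1_on a c s g"
  shows "continuous_on {a..c} s"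
proof (rule continuous_on_eq)
  show "continuous_on {a..c} (\<lambda>x. s a + integral {a..x} g)"
    by (intro continuous_intros indefinite_integral_continuous_1 H1_on_integrable[OF assms])
  show "s a + integral {a..x} g = s x" if "x \<in> {a..c}" for x
    using H1_on_eq_integral[OF assms that] by simp
qed

lemma H1_on_increment:
  assumes H: "H1_on a c s g" and xy: "a \<le> x" "x \<le> y" "y \<le> c"
  shows "s y - s x = integral {x..y} g"
proof -
  have "g integrable_on {a..y}"
    using integrable_subinterval_real[OF H1_on_integrable[OF H]] xy by auto
  then have "integral {a..x} g + integral {x..y} g = integral {a..y} g"
    by (rule Henstock_Kurzweil_Integration.integral_combine[OF xy(1,2)])
  moreover have "s y = s a + integral {a..y} g" "s x = s a + integral {a..x} g"
    by (rule H1_on_eq_integral[OF H]; use xy in simp)+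
  ultimately show ?thesis by linarith
qed

text \<open>AM-GM in the form |g| \<le> g^2/(2d) + d/2 replaces Cauchy-Schwarz.\<close>
lemma H1_on_increment_bound:
  assumes H: "H1_on a c s g" and xy: "a \<le> x" "x \<le> y" "y \<le> c" and d: "d > 0"
  shows "\<bar>s y - s x\<bar> \<le> integral {a..c} (\<lambda>r. (g r)\<^sup>2) / (2 * d) + d * (y - x) / 2"
proof -
  have gxy: "g integrable_on {x..y}"
    using integrable_subinterval_real[OF H1_on_integrable[OF H]] xy by auto
  have g2: "(\<lambda>r. (g r)\<^sup>2) integrable_on {a..c}" by (rule H1_on_square_integrable[OF H])
  then have g2xy: "(\<lambda>r. (g r)\<^sup>2) integrable_on {x..y}"
    using integrable_subinterval_real xy by fastforce
  have amgm: "norm (g r) \<le> (g r)\<^sup>2 / (2 * d) + d / 2" for r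
  proof -
    have "0 \<le> (\<bar>g r\<bar> - d)\<^sup>2" by simp
    then have "2 * d * \<bar>g r\<bar> \<le> (g r)\<^sup>2 + d\<^sup>2"
      by (simp add: power2_eq_square algebra_simps)
    then show ?thesis using d by (simp add: field_simps power2_eq_square)
  qed
  have "((\<lambda>r. (g r)\<^sup>2 / (2 * d) + d / 2) has_integral
          integral {x..y} (\<lambda>r. (g r)\<^sup>2) / (2 * d) + d * (y - x) / 2) {x..y}"
    using has_integral_const_real[of "d/2" x y] xy
    by (auto intro!: has_integral_add has_integral_divide integrable_integral g2xy
        simp: algebra_simps)
  then have "\<bar>integral {x..y} g\<bar> \<le> integral {x..y} (\<lambda>r. (g r)\<^sup>2) / (2 * d) + d * (y - x) / 2"
    using integral_norm_bound_integral[OF gxy _ amgm] by (simp add: has_integral_iff)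
  moreover have "integral {x..y} (\<lambda>r. (g r)\<^sup>2) \<le> integral {a..c} (\<lambda>r. (g r)\<^sup>2)"
    using xy g2xy g2 by (intro integral_subset_le) auto
  then have "integral {x..y} (\<lambda>r. (g r)\<^sup>2) / (2 * d) \<le> integral {a..c} (\<lambda>r. (g r)\<^sup>2) / (2 * d)"
    using d by (simp add: divide_right_mono)
  ultimately show ?thesis
    using H1_on_increment[OF H xy] by linarith
qed

lemma H1_on_uniformly_equicontinuous:
  assumes "e > 0"
  obtains l where "l > 0"
    "\<And>s g x y. H1_on a c s g \<Longrightarrow> integral {a..c} (\<lambda>r. (g r)\<^sup>2) \<le> K \<Longrightarrow>
       x \<in> {a..c} \<Longrightarrow> y \<in> {a..c} \<Longrightarrow> \<bar>y - x\<bar> \<le> l \<Longrightarrow> \<bar>s y - s x\<bar> \<le> e"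
proof
  define d where "d = max K 0 / e + 1"
  have d: "d > 0" "d * e = max K 0 + e"
    using assms unfolding d_def by (auto simp: field_simps add_pos_nonneg)
  show "e / d > 0" using assms d by simp
  have bound: "\<bar>s y - s x\<bar> \<le> e"
    if H: "H1_on a c s g" "integral {a..c} (\<lambda>r. (g r)\<^sup>2) \<le> K"
      and xy: "a \<le> x" "x \<le> y" "y \<le> c" "y - x \<le> e / d" for s g x y
  proof -
    have "integral {a..c} (\<lambda>r. (g r)\<^sup>2) \<le> d * e" using H(2) d(2) assms by linarith
    then have "integral {a..c} (\<lambda>r. (g r)\<^sup>2) / (2 * d) \<le> e / 2"
      using d(1) by (simp add: field_simps)
    moreover have "d * (y - x) \<le> e"
      using xy(4) d(1) by (simp add: field_simps)
    ultimately show ?thesis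
      using H1_on_increment_bound[OF H(1) xy(1-3) d(1)] by linarith
  qed
  fix s g x y
  assume H: "H1_on a c s g" "integral {a..c} (\<lambda>r. (g r)\<^sup>2) \<le> K"
    and xy: "x \<in> {a..c}" "y \<in> {a..c}" "\<bar>y - x\<bar> \<le> e / d"
  show "\<bar>s y - s x\<bar> \<le> e"
  proof (cases "x \<le> y")
    case True
    then show ?thesis using bound[OF H, of x y] xy by simp
  next
    case False
    then have "\<bar>s x - s y\<bar> \<le> e" using bound[OF H, of y x] xy by simp
    then show ?thesis by (simp add: abs_minus_commute)
  qed
qed

lemma admissible_const: "admissible b (\<lambda>_. 1 / sqrt 2) (\<lambda>_. 0)"
  unfolding admissible_def H1_on_def by auto

lemma J_energy_const:
  assumes "0 < b"
  shows "J_energy b lam (\<lambda>_. 1 / sqrt 2) (\<lambda>_. 0) = 2 * pi * integral {b..1} (\<lambda>r. 2 / r)"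
  unfolding J_energy_def
  using assms by (intro arg_cong[where f="\<lambda>x. 2 * pi * x"] integral_cong)
    (simp add: power_divide power2_eq_square field_simps)

lemma J_energy_lower_bound:
  assumes b: "0 < b" and lam: "0 \<le> lam" and H: "H1_on b 1 s g"
  shows "2 * pi * b * (integral {b..1} (\<lambda>r. (g r)\<^sup>2)
           + lam / 4 * integral {b..1} (\<lambda>r. (2 * (s r)\<^sup>2 - 1)\<^sup>2)) \<le> J_energy b lam s g"
proof -
  have sc: "continuous_on {b..1} s" by (rule H1_on_continuous[OF H])
  have g2: "(\<lambda>r. (g r)\<^sup>2) integrable_on {b..1}" by (rule H1_on_square_integrable[OF H])
  have pot: "(\<lambda>r. (2 * (s r)\<^sup>2 - 1)\<^sup>2) integrable_on {b..1}"
    by (intro integrable_continuous_interval continuous_intros sc)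
  have "(\<lambda>r. r * (g r)\<^sup>2) absolutely_integrable_on {b..1}"
    by (intro absolutely_integrable_bounded_measurable_product_real
        continuous_imp_measurable_on_sets_lebesgue nonnegative_absolutely_integrable_1 g2)
      (auto intro!: continuous_intros)
  then have "(\<lambda>r. (g r)\<^sup>2 * r) integrable_on {b..1}"
    unfolding absolutely_integrable_on_def by (simp add: mult.commute)
  moreover have "(\<lambda>r. (4 * (s r)\<^sup>2 / r\<^sup>2 + lam / 4 * (2 * (s r)\<^sup>2 - 1)\<^sup>2) * r) integrable_on {b..1}"
    using b by (intro integrable_continuous_interval) (auto intro!: continuous_intros sc)
  ultimately have energy_int:
    "(\<lambda>r. ((g r)\<^sup>2 + 4 * (s r)\<^sup>2 / r\<^sup>2 + lam / 4 * (2 * (s r)\<^sup>2 - 1)\<^sup>2) * r) integrable_on {b..1}"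
    by (auto dest: integrable_add simp: algebra_simps)
  have weighted: "((\<lambda>r. b * ((g r)\<^sup>2 + lam / 4 * (2 * (s r)\<^sup>2 - 1)\<^sup>2)) has_integral
      b * (integral {b..1} (\<lambda>r. (g r)\<^sup>2) + lam / 4 * integral {b..1} (\<lambda>r. (2 * (s r)\<^sup>2 - 1)\<^sup>2)))
      {b..1}"
    by (intro has_integral_mult_right has_integral_add integrable_integral g2 pot)
  have "b * (integral {b..1} (\<lambda>r. (g r)\<^sup>2) + lam / 4 * integral {b..1} (\<lambda>r. (2 * (s r)\<^sup>2 - 1)\<^sup>2))
      = integral {b..1} (\<lambda>r. b * ((g r)\<^sup>2 + lam / 4 * (2 * (s r)\<^sup>2 - 1)\<^sup>2))"
    by (rule integral_unique[OF weighted, symmetric])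
  also have "\<dots> \<le> integral {b..1}
      (\<lambda>r. ((g r)\<^sup>2 + 4 * (s r)\<^sup>2 / r\<^sup>2 + lam / 4 * (2 * (s r)\<^sup>2 - 1)\<^sup>2) * r)"
  proof (rule integral_le)
    show "(\<lambda>r. b * ((g r)\<^sup>2 + lam / 4 * (2 * (s r)\<^sup>2 - 1)\<^sup>2)) integrable_on {b..1}"
      by (rule has_integral_integrable[OF weighted])
    fix r assume r: "r \<in> {b..1}"
    have "b * ((g r)\<^sup>2 + lam / 4 * (2 * (s r)\<^sup>2 - 1)\<^sup>2) \<le> ((g r)\<^sup>2 + lam / 4 * (2 * (s r)\<^sup>2 - 1)\<^sup>2) * r"
      using r lam by (subst mult.commute) (intro mult_left_mono; simp)
    also have "\<dots> \<le> ((g r)\<^sup>2 + 4 * (s r)\<^sup>2 / r\<^sup>2 + lam / 4 * (2 * (s r)\<^sup>2 - 1)\<^sup>2) * r"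
      using r b by (intro mult_right_mono) auto
    finally show "b * ((g r)\<^sup>2 + lam / 4 * (2 * (s r)\<^sup>2 - 1)\<^sup>2)
        \<le> ((g r)\<^sup>2 + 4 * (s r)\<^sup>2 / r\<^sup>2 + lam / 4 * (2 * (s r)\<^sup>2 - 1)\<^sup>2) * r" .
  qed (rule energy_int)
  finally have "2 * pi * (b * (integral {b..1} (\<lambda>r. (g r)\<^sup>2)
      + lam / 4 * integral {b..1} (\<lambda>r. (2 * (s r)\<^sup>2 - 1)\<^sup>2))) \<le> J_energy b lam s g"
    unfolding J_energy_def by (intro mult_left_mono) auto
  then show ?thesis by (simp only: mult.assoc)
qed

lemma is_minimizer_integral_bounds:
  assumes b: "0 < b" and lam: "0 < lam" and "is_minimizer b lam s"
  defines "K \<equiv> integral {b..1} (\<lambda>r. 2 / r) / b"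
  obtains g where "H1_on b 1 s g" "s b = 1 / sqrt 2"
    "integral {b..1} (\<lambda>r. (g r)\<^sup>2) \<le> K"
    "integral {b..1} (\<lambda>r. (2 * (s r)\<^sup>2 - 1)\<^sup>2) \<le> 4 * K / lam"
proof -
  obtain g where adm: "admissible b s g"
    and J: "J_energy b lam s g \<le> J_energy b lam (\<lambda>_. 1 / sqrt 2) (\<lambda>_. 0)"
    using assms(3) admissible_const unfolding is_minimizer_def by blast
  have H: "H1_on b 1 s g" and sb: "s b = 1 / sqrt 2" using adm unfolding admissible_def by auto
  define D where "D = integral {b..1} (\<lambda>r. (g r)\<^sup>2)"
  define P where "P = integral {b..1} (\<lambda>r. (2 * (s r)\<^sup>2 - 1)\<^sup>2)"
  have "(2 * pi * b) * (D + lam / 4 * P) \<le> J_energy b lam s g"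
    unfolding D_def P_def by (rule J_energy_lower_bound[OF b less_imp_le[OF lam] H])
  also have "\<dots> \<le> 2 * pi * integral {b..1} (\<lambda>r. 2 / r)"
    using J J_energy_const[OF b] by simp
  also have "\<dots> = (2 * pi * b) * K" using b unfolding K_def by simp
  finally have "(2 * pi * b) * (D + lam / 4 * P) \<le> (2 * pi * b) * K" .
  then have sum: "D + lam / 4 * P \<le> K" using b by (simp add: mult_le_cancel_left_pos)
  have "D \<ge> 0" "P \<ge> 0" unfolding D_def P_def
    using H1_on_continuous[OF H] H1_on_square_integrable[OF H]
    by (auto intro!: integral_nonneg integrable_continuous_interval continuous_intros)
  moreover have "0 \<le> lam / 4 * P" using \<open>P \<ge> 0\<close> lam by simp
  ultimately have "D \<le> K" "lam / 4 * P \<le> K" using sum by linarith+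
  then have "D \<le> K" "P \<le> 4 * K / lam" using lam by (auto simp: field_simps)
  then show thesis using that H sb unfolding D_def P_def by blast
qed

text \<open>Near 1/sqrt 2 the factor x + 1/sqrt 2 of 2 x^2 - 1 is at least 1, as sqrt 2 > 11/8.\<close>
lemma double_well_lower_bound:
  fixes x :: real
  assumes "\<bar>x - 1 / sqrt 2\<bar> \<le> 3 / 8"
  shows "4 * (x - 1 / sqrt 2)\<^sup>2 \<le> (2 * x\<^sup>2 - 1)\<^sup>2"
proof -
  define c where "c = 1 / sqrt (2::real)"
  have "(11/8::real) < sqrt 2" by (rule real_less_rsqrt) (simp add: power2_eq_square)
  moreover have "2 * c = sqrt 2" unfolding c_def using real_div_sqrt[of 2] by simp
  ultimately have "1 \<le> x + c" using assms unfolding c_def[symmetric] by arith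
  then have "4 * (x - c)\<^sup>2 * 1 \<le> 4 * (x - c)\<^sup>2 * (x + c)\<^sup>2"
    by (intro mult_left_mono one_le_power) auto
  also have "\<dots> = (2 * x\<^sup>2 - 1)\<^sup>2"
  proof -
    have "2 * c\<^sup>2 = 1" unfolding c_def by (simp add: power_divide)
    then have "2 * x\<^sup>2 - 1 = 2 * (x - c) * (x + c)" by (simp add: algebra_simps power2_eq_square)
    then show ?thesis by (simp only: power_mult_distrib) simp
  qed
  finally show ?thesis unfolding c_def by simp
qed

lemma potential_integral_lower_bound:
  fixes s :: "real \<Rightarrow> real"
  assumes sc: "continuous_on {b..c} s" and sb: "s b = 1 / sqrt 2"
    and e: "0 < e" "e \<le> 1 / 2" and l: "0 < l" "l \<le> c - b"
    and osc: "\<And>x y. x \<in> {b..c} \<Longrightarrow> y \<in> {b..c} \<Longrightarrow> \<bar>y - x\<bar> \<le> l \<Longrightarrow> \<bar>s y - s x\<bar> \<le> e / 4"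
    and far: "x0 \<in> {b..c}" "e \<le> \<bar>s x0 - 1 / sqrt 2\<bar>"
  shows "l * e\<^sup>2 / 4 \<le> integral {b..c} (\<lambda>r. (2 * (s r)\<^sup>2 - 1)\<^sup>2)"
proof -
  define dev where "dev r = \<bar>s r - 1 / sqrt 2\<bar>" for r
  have "continuous_on {b..x0} dev"
    unfolding dev_def using far(1) by (intro continuous_intros continuous_on_subset[OF sc]) auto
  then obtain x1 where x1: "b \<le> x1" "x1 \<le> x0" "dev x1 = e / 2"
    using IVT'[of dev b "e / 2" x0] sb far e unfolding dev_def by auto
  define u where "u = (if x1 + l \<le> c then x1 else c - l)"
  have u: "b \<le> u" "u + l \<le> c" "u \<le> x1" "x1 \<le> u + l"
    using x1 far(1) l unfolding u_def by auto
  have pointwise: "e\<^sup>2 / 4 \<le> (2 * (s r)\<^sup>2 - 1)\<^sup>2" if r: "r \<in> {u..u+l}" for r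
  proof -
    have "\<bar>s r - s x1\<bar> \<le> e / 4" using osc[of x1 r] r u by (auto simp: abs_minus_commute)
    then have "e / 4 \<le> dev r" "dev r \<le> 3 / 8" using x1(3) e unfolding dev_def by arith+
    then have "4 * (e / 4)\<^sup>2 \<le> 4 * (dev r)\<^sup>2" using e by (simp add: power_mono)
    also have "\<dots> \<le> (2 * (s r)\<^sup>2 - 1)\<^sup>2"
      using double_well_lower_bound \<open>dev r \<le> 3 / 8\<close> unfolding dev_def by (simp add: power2_abs)
    finally show ?thesis by (simp add: power2_eq_square)
  qed
  have pot: "(\<lambda>r. (2 * (s r)\<^sup>2 - 1)\<^sup>2) integrable_on {b..c}"
    by (intro integrable_continuous_interval continuous_intros sc)
  then have pot_ul: "(\<lambda>r. (2 * (s r)\<^sup>2 - 1)\<^sup>2) integrable_on {u..u+l}"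
    using integrable_subinterval_real u by fastforce
  have const: "((\<lambda>r. e\<^sup>2 / 4) has_integral l * e\<^sup>2 / 4) {u..u+l}"
    using has_integral_const_real[of "e\<^sup>2 / 4" u "u+l"] l by simp
  have "l * e\<^sup>2 / 4 \<le> integral {u..u+l} (\<lambda>r. (2 * (s r)\<^sup>2 - 1)\<^sup>2)"
    by (rule has_integral_le[OF const integrable_integral[OF pot_ul] pointwise])
  also have "\<dots> \<le> integral {b..c} (\<lambda>r. (2 * (s r)\<^sup>2 - 1)\<^sup>2)"
    using u pot_ul pot by (intro integral_subset_le) auto
  finally show ?thesis .
qed

lemma is_minimizer_eventually_near_const:
  fixes s :: "real \<Rightarrow> real \<Rightarrow> real"
  assumes b: "0 < b" "b < 1" and mini: "\<forall>lam>0. is_minimizer b lam (s lam)"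
    and \<epsilon>: "0 < \<epsilon>" "\<epsilon> \<le> 1 / 2"
  shows "\<forall>\<^sub>F lam in at_top. \<forall>x\<in>{b..1}. \<bar>s lam x - 1 / sqrt 2\<bar> < \<epsilon>"
proof -
  define K where "K = integral {b..1} (\<lambda>r. 2 / r) / b"
  obtain l0 where "l0 > 0" and equicont: "\<And>s g x y. H1_on b 1 s g \<Longrightarrow>
      integral {b..1} (\<lambda>r. (g r)\<^sup>2) \<le> K \<Longrightarrow> x \<in> {b..1} \<Longrightarrow> y \<in> {b..1} \<Longrightarrow>
      \<bar>y - x\<bar> \<le> l0 \<Longrightarrow> \<bar>s y - s x\<bar> \<le> \<epsilon> / 4"
    by (rule H1_on_uniformly_equicontinuous[where e="\<epsilon> / 4" and a=b and c=1 and K=K])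
      (use \<epsilon> in auto)
  define l where "l = min l0 (1 - b)"
  have l: "0 < l" "l \<le> 1 - b" using \<open>l0 > 0\<close> b unfolding l_def by auto
  have l\<epsilon>: "0 < l * \<epsilon>\<^sup>2" using l \<epsilon> by simp
  define L where "L = 16 * \<bar>K\<bar> / (l * \<epsilon>\<^sup>2) + 1"
  have L: "1 \<le> L" "L * (l * \<epsilon>\<^sup>2) = 16 * \<bar>K\<bar> + l * \<epsilon>\<^sup>2"
    using l\<epsilon> unfolding L_def by (auto simp: field_simps)
  have "\<forall>x\<in>{b..1}. \<bar>s lam x - 1 / sqrt 2\<bar> < \<epsilon>" if lam: "L \<le> lam" for lam
  proof (rule ballI, rule ccontr)
    fix x0 assume x0: "x0 \<in> {b..1}" "\<not> \<bar>s lam x0 - 1 / sqrt 2\<bar> < \<epsilon>"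
    have "lam > 0" using lam L(1) by simp
    then obtain g where H: "H1_on b 1 (s lam) g" "s lam b = 1 / sqrt 2"
      "integral {b..1} (\<lambda>r. (g r)\<^sup>2) \<le> K"
      "integral {b..1} (\<lambda>r. (2 * (s lam r)\<^sup>2 - 1)\<^sup>2) \<le> 4 * K / lam"
      using is_minimizer_integral_bounds[OF b(1)] mini unfolding K_def by blast
    have osc: "\<bar>s lam y - s lam x\<bar> \<le> \<epsilon> / 4"
      if "x \<in> {b..1}" "y \<in> {b..1}" "\<bar>y - x\<bar> \<le> l" for x y
      by (rule equicont[OF H(1) H(3)]) (use that in \<open>auto simp: l_def\<close>)
    have "l * \<epsilon>\<^sup>2 / 4 \<le> 4 * K / lam"
      using potential_integral_lower_bound[OF H1_on_continuous[OF H(1)] H(2) \<epsilon> l osc x0(1)]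
        x0(2) H(4) by linarith
    then have "lam * (l * \<epsilon>\<^sup>2) \<le> 16 * K" using \<open>lam > 0\<close> by (simp add: field_simps)
    moreover have "L * (l * \<epsilon>\<^sup>2) \<le> lam * (l * \<epsilon>\<^sup>2)"
      using mult_right_mono[OF lam] l\<epsilon> by simp
    ultimately show False using L(2) l\<epsilon> by linarith
  qed
  then show ?thesis unfolding eventually_at_top_linorder by blast
qed

theorem proposition4:
  fixes b :: real and s :: "real \<Rightarrow> real \<Rightarrow> real"
  assumes "0 < b" and "b < 1"
    and "\<forall>lam>0. is_minimizer b lam (s lam)"
  shows "uniform_limit {b..1} s (\<lambda>_. 1 / sqrt 2) at_top"
  unfolding uniform_limit_iff dist_real_def
proof (intro allI impI)
  fix e :: real assume "e > 0"
  have "\<forall>\<^sub>F lam in at_top. \<forall>x\<in>{b..1}. \<bar>s lam x - 1 / sqrt 2\<bar> < min e (1 / 2)"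
    by (rule is_minimizer_eventually_near_const[OF assms]) (use \<open>e > 0\<close> in auto)
  then show "\<forall>\<^sub>F lam in at_top. \<forall>x\<in>{b..1}. \<bar>s lam x - 1 / sqrt 2\<bar> < e"
    by (rule eventually_mono) auto
qed

end
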